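(* Let $\boldsymbol{\mathcal{G}}=(\mathcal{V},\boldsymbol{\mathcal{E}},\mu(\cdot))$ be a stochastic digraph with vertex set $\mathbb{Z}_n$, edge sets $\mathcal{E}_1,\dots,\mathcal{E}_h$, and out-neighborhood map $H(x,w)=\{y:(x,y)\in\mathcal{E}_w\}$, such that there is no pair $(i,w)\in\mathbb{Z}_n\times\mathbb{Z}_h$ with $\mu(\{w\})>0$ and $H(i,w)=\emptyset$. Let $\mathcal{Q}\subset\mathbb{Z}_n$ and let $\check{\boldsymbol{\mathcal{G}}}$ be the augmented stochastic digraph on $\mathbb{Z}_{n+2}$ (with the same $\mu$) obtained by replacing, in each $\mathcal{E}_s$, every edge $(i,j)$ with $j\in\mathcal{Q}$ by the edge $(i,n+1)$, and adding the edges $(n+1,n+2)$ and $(n+2,n+2)$ to each $\mathcal{E}_s$. Let $\check H$ be its out-neighborhood map and consider the Markov decision process on states $\mathbb{Z}_{n+2}$ with action space $\mathcal{A}(i)$ at state $i$ equal to the set of tuples $a=(\xi_{1,a},\dots,\xi_{h,a})$ with $\xi_{w,a}\in\check H(i,w)$ for each $w$, transition probabilities $$\check p(j\mid i,a)=\sum_{w\in\{s\in\mathbb{Z}_h:\,\xi_{s,a}=j\}}\mu(\{w\}),$$ and reward $r(i,a,j)=\mathbb{I}_{\{n+1\}}(j)$. Let $v_\star$ be the optimal state-value function of this MDP, i.e., $v_\star(0,x)=0$ and $v_\star(k,x)=\max_{a\in\mathcal{A}(x)}\sum_{j}\check p(j\mid x,a)\big(r(x,a,j)+v_\star(k-1,j)\big)$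 for $k\geqslant1$. Then for all $k\in\mathbb{Z}_{\geqslant0}$ and all $x\in\mathbb{Z}_n$, $$\mathfrak{R}_{\mathcal{Q}}(k,x)=v_\star(k,x),$$ where $\mathfrak{R}_{\mathcal{Q}}(k,x):=\sup_{\boldsymbol{x}\in\mathcal{S}(x)}\mathbb{P}\big(\exists\,t\in\{1,\dots,k\}:\boldsymbol{x}_t\in\mathcal{Q}\big)$ is the weak reachability probability.
   Context: A stochastic digraph is a triple $(\mathbb{Z}_n,\{\mathcal{E}_s\}_{s=1}^h,\mu)$ with $\mathcal{E}_s\subset\mathbb{Z}_n\times\mathbb{Z}_n$ and $\mu$ the common distribution of an i.i.d. sequence $\boldsymbol{w}_k:\Omega\to\mathbb{Z}_h$, $k\in\mathbb{Z}_{\geqslant0}$, on a probability space $(\Omega,\mathcal{F},\mathbb{P})$. A stochastic directed path from $x$ is a map $\omega\mapsto\{\boldsymbol{x}_k(\omega)\}_{k=0}^{\boldsymbol{K}(\omega)}$ with $\boldsymbol{x}_0=x$, $\boldsymbol{x}_{k+1}(\omega)\in H(\boldsymbol{x}_k(\omega),\boldsymbol{w}_k(\omega))$ for all $\omega$ and $k<\boldsymbol{K}(\omega)$, and with $\boldsymbol{x}_{k+1}$ measurable with respect to $\sigma(\boldsymbol{w}_0,\dots,\boldsymbol{w}_k)$ for each $k$. It is maximal if it cannot be extended; $\mathcal{S}(x)$ is the set of maximal stochastic directed paths from $x$. $\mathbb{I}_{A}$ denotes the indicator function of the set $A$. *)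

theory Defs
  imports "HOL-Probability.Probability"
begin

text \<open>Conventions: Z_n = {1..n}, Z_h = {1..h}; edge sets E s for s in {1..h}.\<close>

definition out_nbhd :: "(nat \<Rightarrow> (nat \<times> nat) set) \<Rightarrow> nat \<Rightarrow> nat \<Rightarrow> nat set" where
  "out_nbhd E x s = {y. (x, y) \<in> E s}"

definition aug_edges :: "nat \<Rightarrow> nat set \<Rightarrow> (nat \<Rightarrow> (nat \<times> nat) set) \<Rightarrow> nat \<Rightarrow> (nat \<times> nat) set" where
  "aug_edges n Q E s =
     {(i, j) | i j. (i, j) \<in> E s \<and> j \<notin> Q} \<union> {(i, n + 1) | i j. (i, j) \<in> E s \<and> j \<in> Q}
     \<union> {(n + 1, n + 2), (n + 2, n + 2)}"

text \<open>Action set: tuples (xi_1,...,xi_h), represented as lists of length h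
  (xi_w = a ! (w - 1)) with xi_w in the augmented out-neighbourhood.  When that
  neighbourhood is empty (only possible if mu w = 0) the component is unconstrained
  within the state space.\<close>
definition mdp_actions :: "nat \<Rightarrow> nat \<Rightarrow> nat set \<Rightarrow> (nat \<Rightarrow> (nat \<times> nat) set) \<Rightarrow> nat \<Rightarrow> nat list set" where
  "mdp_actions n h Q E i =
     {a. length a = h \<and>
         (\<forall>w\<in>{1..h}. a ! (w - 1) \<in>
            (if out_nbhd (aug_edges n Q E) i w = {} then {1..n+2}
             else out_nbhd (aug_edges n Q E) i w))}"

definition mdp_trans :: "nat \<Rightarrow> (nat \<Rightarrow> real) \<Rightarrow> nat \<Rightarrow> nat list \<Rightarrow> real" where
  "mdp_trans h mu j a = (\<Sum>w\<in>{s\<in>{1..h}. a ! (s - 1) = j}. mu w)"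

definition mdp_reward :: "nat \<Rightarrow> nat \<Rightarrow> real" where
  "mdp_reward n j = indicator {n + 1} j"

fun v_star :: "nat \<Rightarrow> nat \<Rightarrow> nat set \<Rightarrow> (nat \<Rightarrow> (nat \<times> nat) set) \<Rightarrow> (nat \<Rightarrow> real) \<Rightarrow> nat \<Rightarrow> nat \<Rightarrow> real" where
  "v_star n h Q E mu 0 x = 0"
| "v_star n h Q E mu (Suc k) x =
     Max ((\<lambda>a. \<Sum>j\<in>{1..n+2}. mdp_trans h mu j a * (mdp_reward n j + v_star n h Q E mu k j))
          ` mdp_actions n h Q E x)"

text \<open>Stochastic directed path from x0: X k is the k-th vertex, K the (random) length.
  X (Suc k) is measurable w.r.t. sigma(w_0,...,w_k).\<close>
definition stoch_path ::
  "'a measure \<Rightarrow> (nat \<Rightarrow> 'a \<Rightarrow> nat) \<Rightarrow> (nat \<Rightarrow> nat \<Rightarrow> nat set) \<Rightarrow> nat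
   \<Rightarrow> (nat \<Rightarrow> 'a \<Rightarrow> nat) \<Rightarrow> ('a \<Rightarrow> enat) \<Rightarrow> bool" where
  "stoch_path M w H x0 X K \<longleftrightarrow>
     (\<forall>\<omega>\<in>space M. X 0 \<omega> = x0) \<and>
     (\<forall>\<omega>\<in>space M. \<forall>k. enat k < K \<omega> \<longrightarrow> X (Suc k) \<omega> \<in> H (X k \<omega>) (w k \<omega>)) \<and>
     (\<forall>k. X (Suc k) \<in> measurable
           (vimage_algebra (space M) (\<lambda>\<omega>. map (\<lambda>i. w i \<omega>) [0..<Suc k]) (count_space UNIV))
           (count_space UNIV))"

definition maximal_path ::
  "'a measure \<Rightarrow> (nat \<Rightarrow> 'a \<Rightarrow> nat) \<Rightarrow> (nat \<Rightarrow> nat \<Rightarrow> nat set)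
   \<Rightarrow> (nat \<Rightarrow> 'a \<Rightarrow> nat) \<Rightarrow> ('a \<Rightarrow> enat) \<Rightarrow> bool" where
  "maximal_path M w H X K \<longleftrightarrow>
     (\<forall>\<omega>\<in>space M. \<forall>k. K \<omega> = enat k \<longrightarrow> H (X k \<omega>) (w k \<omega>) = {})"

definition weak_reach ::
  "'a measure \<Rightarrow> (nat \<Rightarrow> 'a \<Rightarrow> nat) \<Rightarrow> (nat \<Rightarrow> nat \<Rightarrow> nat set) \<Rightarrow> nat set \<Rightarrow> nat \<Rightarrow> nat \<Rightarrow> real" where
  "weak_reach M w H Q k x0 =
     Sup {measure M {\<omega>\<in>space M. \<exists>t\<in>{1..k}. enat t \<le> K \<omega> \<and> X t \<omega> \<in> Q} | X K.
            stoch_path M w H x0 X K \<and> maximal_path M w H X K}"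

end

theory Submission
  imports Defs
begin

(* Only the finitely many input words of length k matter, and each has probability the product of
   the weights mu of its letters.  Measurability of X (t+1) with respect to sigma(w_0, ..., w_t)
   makes every stochastic path a function of the inputs read so far, i.e. a strategy mapping input
   words to vertices that follows the edges along words of positive probability.  By induction on
   k, the probability that a strategy meets Q within k steps is at most v_star k x: a step into Q
   is matched by the action moving to the absorbing vertex n+1, which earns reward 1 once and
   nothing afterwards.  Conversely, playing an optimal action at every step, and an edge into Q
   whenever that action moves to n+1, and stopping at the first dead end, yields a maximal
   stochastic path whose probability of meeting Q within k steps is exactly v_star k x. *)

section \<open>Input words\<close>

definition input_prefix :: "(nat \<Rightarrow> 'a \<Rightarrow> nat) \<Rightarrow> nat \<Rightarrow> 'a \<Rightarrow> nat list" where
  "input_prefix w k \<omega> = map (\<lambda>i. w i \<omega>) [0..<k]"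

definition words :: "nat \<Rightarrow> nat \<Rightarrow> nat list set" where
  "words h k = {ss. set ss \<subseteq> {1..h} \<and> length ss = k}"

definition word_prob :: "(nat \<Rightarrow> real) \<Rightarrow> nat list \<Rightarrow> real" where
  "word_prob mu ss = prod_list (map mu ss)"

lemma length_input_prefix [simp]: "length (input_prefix w k \<omega>) = k"
  by (simp add: input_prefix_def)

lemma nth_input_prefix [simp]: "i < k \<Longrightarrow> input_prefix w k \<omega> ! i = w i \<omega>"
  by (simp add: input_prefix_def)

lemma input_prefix_Suc: "input_prefix w (Suc k) \<omega> = input_prefix w k \<omega> @ [w k \<omega>]"
  by (simp add: input_prefix_def)

lemma take_input_prefix: "t \<le> k \<Longrightarrow> take t (input_prefix w k \<omega>) = input_prefix w t \<omega>"
  by (simp add: input_prefix_def take_map)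

lemma finite_words: "finite (words h k)"
  unfolding words_def by (rule finite_lists_length_eq) simp

lemma word_prob_Nil [simp]: "word_prob mu [] = 1"
  and word_prob_Cons [simp]: "word_prob mu (s # ss) = mu s * word_prob mu ss"
  by (simp_all add: word_prob_def)

lemma sum_words_Suc:
  "(\<Sum>ss\<in>words h (Suc k). f ss) = (\<Sum>s\<in>{1..h}. \<Sum>ss\<in>words h k. f (s # ss))"
proof -
  have "words h (Suc k) = (\<lambda>(s, ss). s # ss) ` ({1..h} \<times> words h k)"
    by (auto simp: words_def length_Suc_conv image_iff)
  moreover have "inj_on (\<lambda>(s, ss). s # ss) ({1..h} \<times> words h k)"
    by (auto simp: inj_on_def)
  ultimately show ?thesis
    by (simp add: sum.reindex sum.cartesian_product case_prod_unfold)
qed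

lemma sum_word_prob: "(\<Sum>ss\<in>words h k. word_prob mu ss) = (\<Sum>s\<in>{1..h}. mu s) ^ k"
proof (induction k)
  case 0
  have "words h 0 = {[]}"
    by (auto simp: words_def)
  then show ?case
    by simp
next
  case (Suc k)
  then show ?case
    by (simp add: sum_words_Suc flip: sum_distrib_left sum_distrib_right)
qed

definition first_time :: "(nat \<Rightarrow> bool) \<Rightarrow> enat" where
  "first_time P = (if \<exists>t. P t then enat (LEAST t. P t) else \<infinity>)"

lemma enat_le_first_time_iff: "enat t \<le> first_time P \<longleftrightarrow> (\<forall>t'<t. \<not> P t')"
proof (cases "\<exists>t. P t")
  case True
  then have "t \<le> (LEAST t. P t) \<longleftrightarrow> (\<forall>t'<t. \<not> P t')"
    by (metis LeastI_ex not_less_Least order.strict_trans2 not_le)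
  with True show ?thesis
    by (simp add: first_time_def)
qed (simp add: first_time_def)

lemma first_time_eq_enatD: "first_time P = enat t \<Longrightarrow> P t"
  unfolding first_time_def by (cases "\<exists>t. P t") (auto intro: LeastI_ex)

lemma measurable_vimage_algebra_fibre_eq:
  assumes f: "f \<in> vimage_algebra X g (count_space UNIV) \<rightarrow>\<^sub>M count_space UNIV"
    and "x \<in> X" "y \<in> X" "g x = g y"
  shows "f x = f y"
proof -
  have "f -` {f x} \<inter> X \<in> sets (vimage_algebra X g (count_space UNIV))"
    using measurable_sets[OF f] by simp
  then obtain A where A: "f -` {f x} \<inter> X = g -` A \<inter> X"
    by (auto simp: sets_vimage_algebra2)
  have "x \<in> f -` {f x} \<inter> X"
    using \<open>x \<in> X\<close> by simp
  then have "y \<in> g -` A \<inter> X"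
    using \<open>y \<in> X\<close> \<open>g x = g y\<close> by (simp add: A)
  then have "y \<in> f -` {f x} \<inter> X"
    by (simp only: A)
  then show ?thesis
    by simp
qed

lemma stoch_path_input_prefix_eq:
  assumes "stoch_path M w H x0 X K" "\<omega> \<in> space M" "\<omega>' \<in> space M"
    and "input_prefix w t \<omega> = input_prefix w t \<omega>'"
  shows "X t \<omega> = X t \<omega>'"
proof (cases t)
  case 0
  with assms(1-3) show ?thesis
    by (simp add: stoch_path_def)
next
  case (Suc t')
  with assms(1) have "X t \<in> vimage_algebra (space M) (input_prefix w t) (count_space UNIV)
      \<rightarrow>\<^sub>M count_space UNIV"
    by (simp add: stoch_path_def input_prefix_def[abs_def])
  then show ?thesis
    using assms(2-4) by (rule measurable_vimage_algebra_fibre_eq)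
qed

section \<open>The i.i.d. input process\<close>

locale iid_inputs = prob_space M for M :: "'a measure" +
  fixes w :: "nat \<Rightarrow> 'a \<Rightarrow> nat" and h :: nat and mu :: "nat \<Rightarrow> real"
  assumes measurable_w: "w i \<in> M \<rightarrow>\<^sub>M count_space UNIV"
    and w_range: "\<omega> \<in> space M \<Longrightarrow> w i \<omega> \<in> {1..h}"
    and indep_w: "indep_vars (\<lambda>_. count_space UNIV) w UNIV"
    and prob_w_eq: "s \<in> {1..h} \<Longrightarrow> prob {\<omega>\<in>space M. w i \<omega> = s} = mu s"
begin

lemma mu_nonneg: "s \<in> {1..h} \<Longrightarrow> 0 \<le> mu s"
  using prob_w_eq[of s 0] by (metis measure_nonneg)

lemma input_prefix_in_words: "\<omega> \<in> space M \<Longrightarrow> input_prefix w k \<omega> \<in> words h k"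
  using w_range by (auto simp: words_def input_prefix_def)

lemma measurable_input_prefix: "input_prefix w k \<in> M \<rightarrow>\<^sub>M count_space UNIV"
proof (induction k)
  case 0
  then show ?case
    by (simp add: input_prefix_def)
next
  case (Suc k)
  have "(\<lambda>\<omega>. l @ [w k \<omega>]) \<in> M \<rightarrow>\<^sub>M count_space UNIV" for l
    using measurable_w by (rule measurable_compose) simp
  then have "(\<lambda>\<omega>. input_prefix w k \<omega> @ [w k \<omega>]) \<in> M \<rightarrow>\<^sub>M count_space UNIV"
    using Suc.IH by (rule measurable_compose_countable)
  then show ?case
    by (simp add: input_prefix_Suc[abs_def])
qed

lemma sets_input_prefix_in: "{\<omega>\<in>space M. input_prefix w k \<omega> \<in> B} \<in> sets M"
  using measurable_input_prefix by measurable

lemma prob_input_prefix_eq: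
  assumes "ss \<in> words h k"
  shows "prob {\<omega>\<in>space M. input_prefix w k \<omega> = ss} = word_prob mu ss"
proof (cases "k = 0")
  case True
  with assms show ?thesis
    by (simp add: words_def input_prefix_def prob_space)
next
  case False
  have len: "length ss = k" and syms: "\<And>i. i < k \<Longrightarrow> ss ! i \<in> {1..h}"
    using assms nth_mem by (fastforce simp: words_def)+
  have "{\<omega>\<in>space M. input_prefix w k \<omega> = ss} = (\<Inter>i\<in>{..<k}. w i -` {ss ! i} \<inter> space M)"
    using len False by (auto simp: input_prefix_def list_eq_iff_nth_eq)
  also have "prob \<dots> = (\<Prod>i\<in>{..<k}. prob (w i -` {ss ! i} \<inter> space M))"
    using False by (intro indep_varsD[OF indep_w]) auto
  also have "\<dots> = (\<Prod>i\<in>{..<k}. mu (ss ! i))"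
    using syms by (intro prod.cong refl) (simp add: vimage_def Int_def conj_commute prob_w_eq)
  also have "\<dots> = word_prob mu ss"
    using len by (simp add: word_prob_def prod.list_conv_set_nth atLeast0LessThan)
  finally show ?thesis .
qed

lemma prob_input_prefix_in:
  "prob {\<omega>\<in>space M. input_prefix w k \<omega> \<in> B} = (\<Sum>ss\<in>{ss\<in>words h k. ss \<in> B}. word_prob mu ss)"
proof -
  let ?S = "{ss\<in>words h k. ss \<in> B}"
  have "{\<omega>\<in>space M. input_prefix w k \<omega> \<in> B} = (\<Union>ss\<in>?S. {\<omega>\<in>space M. input_prefix w k \<omega> = ss})"
    using input_prefix_in_words by auto
  also have "prob \<dots> = (\<Sum>ss\<in>?S. prob {\<omega>\<in>space M. input_prefix w k \<omega> = ss})"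
    using sets_input_prefix_in[of k "{_}"]
    by (intro finite_measure_finite_Union) (auto simp: finite_words disjoint_family_on_def)
  also have "\<dots> = (\<Sum>ss\<in>?S. word_prob mu ss)"
    by (intro sum.cong refl) (simp add: prob_input_prefix_eq)
  finally show ?thesis .
qed

lemma sum_mu_eq_1: "(\<Sum>s\<in>{1..h}. mu s) = 1"
  using prob_input_prefix_in[of 1 UNIV] sum_word_prob[of mu h 1] by (simp add: prob_space)

lemma exists_input_prefix_eq:
  assumes "ss \<in> words h k" "word_prob mu ss \<noteq> 0"
  shows "\<exists>\<omega>\<in>space M. input_prefix w k \<omega> = ss"
proof (rule ccontr)
  assume "\<not> ?thesis"
  then have "{\<omega>\<in>space M. input_prefix w k \<omega> = ss} = {}"
    by blast
  with prob_input_prefix_eq[OF assms(1)] assms(2) show False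
    by simp
qed

lemma sets_input_prefix_determined:
  assumes "\<And>\<omega> \<omega>'. \<omega> \<in> space M \<Longrightarrow> \<omega>' \<in> space M \<Longrightarrow> input_prefix w k \<omega> = input_prefix w k \<omega>' \<Longrightarrow> P \<omega> \<Longrightarrow> P \<omega>'"
  shows "{\<omega>\<in>space M. P \<omega>} \<in> sets M"
proof -
  have "{\<omega>\<in>space M. P \<omega>} = {\<omega>\<in>space M. input_prefix w k \<omega> \<in> input_prefix w k ` {\<omega>\<in>space M. P \<omega>}}"
  proof (intro set_eqI iffI)
    fix \<omega>
    assume "\<omega> \<in> {\<omega>\<in>space M. input_prefix w k \<omega> \<in> input_prefix w k ` {\<omega>\<in>space M. P \<omega>}}"
    then obtain \<omega>' where "\<omega> \<in> space M" "\<omega>' \<in> space M" "P \<omega>'"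
      "input_prefix w k \<omega>' = input_prefix w k \<omega>"
      by auto
    then show "\<omega> \<in> {\<omega>\<in>space M. P \<omega>}"
      using assms by blast
  qed auto
  also have "\<dots> \<in> sets M"
    by (rule sets_input_prefix_in)
  finally show ?thesis .
qed

end

section \<open>Strategies and the reachability MDP\<close>

definition hits :: "nat set \<Rightarrow> (nat list \<Rightarrow> nat) \<Rightarrow> nat \<Rightarrow> nat list \<Rightarrow> bool" where
  "hits Q G k ss \<longleftrightarrow> (\<exists>t\<in>{1..k}. G (take t ss) \<in> Q)"

lemma not_hits_0 [simp]: "\<not> hits Q G 0 ss"
  by (simp add: hits_def)

lemma hits_Suc_Cons: "hits Q G (Suc k) (s # ss) \<longleftrightarrow> G [s] \<in> Q \<or> hits Q (\<lambda>l. G (s # l)) k ss"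
proof -
  have "{1..Suc k} = insert 1 (Suc ` {1..k})"
    by (auto simp: image_iff)
  then show ?thesis
    unfolding hits_def by (simp del: image_Suc_atLeastAtMost)
qed

locale reach_mdp =
  fixes n h :: nat and E :: "nat \<Rightarrow> (nat \<times> nat) set" and Q :: "nat set" and mu :: "nat \<Rightarrow> real"
  assumes mu_nonneg: "s \<in> {1..h} \<Longrightarrow> 0 \<le> mu s"
    and sum_mu_eq_1: "(\<Sum>s\<in>{1..h}. mu s) = 1"
    and edges_sub: "s \<in> {1..h} \<Longrightarrow> E s \<subseteq> {1..n} \<times> {1..n}"
    and out_nbhd_nonempty: "i \<in> {1..n} \<Longrightarrow> s \<in> {1..h} \<Longrightarrow> 0 < mu s \<Longrightarrow> out_nbhd E i s \<noteq> {}"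
begin

abbreviation V :: "nat \<Rightarrow> nat \<Rightarrow> real" where
  "V \<equiv> v_star n h Q E mu"

abbreviation aug :: "nat \<Rightarrow> nat \<Rightarrow> nat set" where
  "aug \<equiv> out_nbhd (aug_edges n Q E)"

abbreviation actions :: "nat \<Rightarrow> nat list set" where
  "actions \<equiv> mdp_actions n h Q E"

abbreviation supp_mu :: "nat set" where
  "supp_mu \<equiv> {s\<in>{1..h}. 0 < mu s}"

lemma out_nbhd_sub: "s \<in> {1..h} \<Longrightarrow> out_nbhd E i s \<subseteq> {1..n}"
  using edges_sub by (auto simp: out_nbhd_def)

lemma edge_in_vertices: "s \<in> {1..h} \<Longrightarrow> (i, j) \<in> E s \<Longrightarrow> i \<in> {1..n} \<and> j \<in> {1..n}"
  using edges_sub by blast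

lemma aug_sub:
  assumes "s \<in> {1..h}"
  shows "aug i s \<subseteq> {1..n+2}"
  by (auto simp: out_nbhd_def aug_edges_def dest!: edge_in_vertices[OF assms])

lemma aug_absorbing:
  assumes "s \<in> {1..h}" "i \<in> {n+1, n+2}"
  shows "aug i s = {n+2}"
  using assms(2) by (auto simp: out_nbhd_def aug_edges_def dest!: edge_in_vertices[OF assms(1)])

lemma aug_of_edge: "(i, j) \<in> E s \<Longrightarrow> (if j \<in> Q then n+1 else j) \<in> aug i s"
  by (auto simp: out_nbhd_def aug_edges_def)

lemma aug_cases:
  assumes "c \<in> aug i s" "i \<in> {1..n}" "s \<in> {1..h}"
  obtains "(i, c) \<in> E s" "c \<in> {1..n}" "c \<notin> Q" | "c = n+1" "\<exists>q\<in>Q. (i, q) \<in> E s"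
proof -
  consider "(i, c) \<in> E s" "c \<notin> Q" | "c = n+1" "\<exists>q\<in>Q. (i, q) \<in> E s"
    using assms(1,2) by (auto simp: out_nbhd_def aug_edges_def)
  then show thesis
    using that edge_in_vertices[OF assms(3)] by cases blast+
qed

definition admissible :: "nat \<Rightarrow> nat \<Rightarrow> nat set" where
  "admissible i s = (if aug i s = {} then {1..n+2} else aug i s)"

lemma admissible_sub: "s \<in> {1..h} \<Longrightarrow> admissible i s \<subseteq> {1..n+2}"
  using aug_sub by (simp add: admissible_def)

lemma admissible_nonempty: "admissible i s \<noteq> {}"
  by (simp add: admissible_def)

lemma mem_actions_iff:
  "a \<in> actions i \<longleftrightarrow> length a = h \<and> (\<forall>s\<in>{1..h}. a ! (s - 1) \<in> admissible i s)"
  by (simp add: mdp_actions_def admissible_def)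

lemma nth_action_admissible: "a \<in> actions i \<Longrightarrow> s \<in> {1..h} \<Longrightarrow> a ! (s - 1) \<in> admissible i s"
  unfolding mem_actions_iff by blast

lemma nth_action_in_states: "a \<in> actions i \<Longrightarrow> s \<in> {1..h} \<Longrightarrow> a ! (s - 1) \<in> {1..n+2}"
  using nth_action_admissible admissible_sub by blast

lemma finite_actions: "finite (actions i)"
proof -
  have "actions i \<subseteq> {a. set a \<subseteq> {1..n+2} \<and> length a = h}"
  proof
    fix a
    assume a: "a \<in> actions i"
    have "a ! j \<in> {1..n+2}" if "j < h" for j
      using nth_action_in_states[OF a, of "Suc j"] that by simp
    with a show "a \<in> {a. set a \<subseteq> {1..n+2} \<and> length a = h}"
      by (auto simp: mem_actions_iff in_set_conv_nth)
  qed
  then show ?thesis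
    by (rule finite_subset) (simp add: finite_lists_length_eq)
qed

definition action_of :: "(nat \<Rightarrow> nat) \<Rightarrow> nat list" where
  "action_of f = map f [1..<Suc h]"

lemma nth_action_of: "s \<in> {1..h} \<Longrightarrow> action_of f ! (s - 1) = f s"
  by (auto simp: action_of_def nth_map simp del: upt_Suc)

lemma action_of_mem_actions:
  assumes "\<And>s. s \<in> {1..h} \<Longrightarrow> f s \<in> admissible i s"
  shows "action_of f \<in> actions i"
  unfolding mem_actions_iff
proof (intro conjI ballI)
  show "length (action_of f) = h"
    by (simp add: action_of_def)
  fix s
  assume "s \<in> {1..h}"
  with assms[OF this] show "action_of f ! (s - 1) \<in> admissible i s"
    by (simp only: nth_action_of)
qed

lemma actions_nonempty: "actions i \<noteq> {}"
proof -
  have "action_of (\<lambda>s. SOME z. z \<in> admissible i s) \<in> actions i"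
    by (rule action_of_mem_actions) (simp add: some_in_eq admissible_nonempty)
  then show ?thesis
    by blast
qed

definition action_value :: "nat \<Rightarrow> nat list \<Rightarrow> real" where
  "action_value k a = (\<Sum>j\<in>{1..n+2}. mdp_trans h mu j a * (mdp_reward n j + V k j))"

lemma v_star_Suc: "V (Suc k) i = Max (action_value k ` actions i)"
  by (simp add: action_value_def)

lemma action_value_ge_v_star_Suc: "a \<in> actions i \<Longrightarrow> action_value k a \<le> V (Suc k) i"
  unfolding v_star_Suc by (simp add: finite_actions)

lemma v_star_Suc_attained: "\<exists>a\<in>actions i. action_value k a = V (Suc k) i"
proof -
  have "Max (action_value k ` actions i) \<in> action_value k ` actions i"
    by (rule Max_in) (simp_all add: finite_actions actions_nonempty)
  then show ?thesis
    unfolding v_star_Suc by (metis imageE)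
qed

lemma action_value_eq:
  assumes "a \<in> actions i"
  shows "action_value k a = (\<Sum>s\<in>{1..h}. mu s * (mdp_reward n (a ! (s - 1)) + V k (a ! (s - 1))))"
proof -
  have "action_value k a = (\<Sum>j\<in>{1..n+2}. \<Sum>s\<in>{s\<in>{1..h}. a ! (s - 1) = j}.
      mu s * (mdp_reward n (a ! (s - 1)) + V k (a ! (s - 1))))"
    unfolding action_value_def mdp_trans_def sum_distrib_right by (intro sum.cong refl) auto
  also have "\<dots> = (\<Sum>s\<in>{1..h}. mu s * (mdp_reward n (a ! (s - 1)) + V k (a ! (s - 1))))"
    using nth_action_in_states[OF assms] by (intro sum.group) auto
  finally show ?thesis .
qed

lemma v_star_absorbing: "i \<in> {n+1, n+2} \<Longrightarrow> V k i = 0"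
proof (induction k arbitrary: i)
  case (Suc k)
  have "action_value k a = 0" if "a \<in> actions i" for a
  proof -
    have "a ! (s - 1) = n+2" if "s \<in> {1..h}" for s
      using nth_action_admissible[OF \<open>a \<in> actions i\<close> that] aug_absorbing[OF that Suc.prems]
      by (simp add: admissible_def)
    then show ?thesis
      using Suc.IH by (simp add: action_value_eq[OF \<open>a \<in> actions i\<close>] mdp_reward_def)
  qed
  then have "action_value k ` actions i = (\<lambda>_. 0) ` actions i"
    by (rule image_cong[OF refl])
  then show ?case
    using actions_nonempty[of i] by (simp only: v_star_Suc image_constant_conv if_False Max_singleton)
qed simp

lemma reward_plus_v_star_target: "mdp_reward n (n+1) + V k (n+1) = 1"
  by (simp add: mdp_reward_def v_star_absorbing)

lemma reward_plus_v_star_vertex: "j \<in> {1..n} \<Longrightarrow> mdp_reward n j + V k j = V k j"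
  by (simp add: mdp_reward_def)

lemma mult_left_mono_supp_mu:
  assumes "s \<in> {1..h}" "s \<in> supp_mu \<Longrightarrow> a \<le> b"
  shows "mu s * a \<le> mu s * b"
proof (cases "s \<in> supp_mu")
  case True
  with assms mu_nonneg[OF assms(1)] show ?thesis
    by (simp add: mult_left_mono)
next
  case False
  with assms(1) mu_nonneg[OF assms(1)] have "mu s = 0"
    by simp
  then show ?thesis
    by simp
qed

definition hit_weight :: "(nat list \<Rightarrow> nat) \<Rightarrow> nat \<Rightarrow> real" where
  "hit_weight G k = (\<Sum>ss\<in>{ss\<in>words h k. hits Q G k ss}. word_prob mu ss)"

lemma word_prob_eq_0:
  assumes "ss \<in> words h k" "\<not> set ss \<subseteq> supp_mu"
  shows "word_prob mu ss = 0"
proof -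
  obtain s where s: "s \<in> set ss" "s \<in> {1..h}" "\<not> 0 < mu s"
    using assms unfolding words_def by blast
  with mu_nonneg have "mu s = 0"
    by (simp add: less_le)
  with s(1) show ?thesis
    by (force simp: word_prob_def prod_list_zero_iff)
qed

lemma hit_weight_supp_mu:
  "hit_weight G k = (\<Sum>ss\<in>{ss\<in>words h k. set ss \<subseteq> supp_mu \<and> hits Q G k ss}. word_prob mu ss)"
  unfolding hit_weight_def
proof (rule sum.mono_neutral_right)
  show "\<forall>ss\<in>{ss\<in>words h k. hits Q G k ss} - {ss\<in>words h k. set ss \<subseteq> supp_mu \<and> hits Q G k ss}.
      word_prob mu ss = 0"
    using word_prob_eq_0 by blast
qed (auto simp: finite_words)

lemma hit_weight_Suc:
  "hit_weight G (Suc k) =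
    (\<Sum>s\<in>{1..h}. mu s * (if G [s] \<in> Q then 1 else hit_weight (\<lambda>l. G (s # l)) k))"
proof -
  have "hit_weight G (Suc k) = (\<Sum>ss\<in>words h (Suc k). if hits Q G (Suc k) ss then word_prob mu ss else 0)"
    unfolding hit_weight_def by (rule sum.inter_filter[OF finite_words])
  also have "\<dots> = (\<Sum>s\<in>{1..h}. mu s * (\<Sum>ss\<in>words h k.
      if G [s] \<in> Q \<or> hits Q (\<lambda>l. G (s # l)) k ss then word_prob mu ss else 0))"
    unfolding sum_words_Suc sum_distrib_left by (intro sum.cong refl) (auto simp: hits_Suc_Cons)
  also have "\<dots> = (\<Sum>s\<in>{1..h}. mu s * (if G [s] \<in> Q then 1 else hit_weight (\<lambda>l. G (s # l)) k))"
    by (intro sum.cong refl)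
      (simp add: hit_weight_def sum.inter_filter[OF finite_words] sum_word_prob[of mu h k, unfolded sum_mu_eq_1])
  finally show ?thesis .
qed

text \<open>A strategy maps the inputs read so far to the current vertex.\<close>

definition feasible_strategy :: "(nat list \<Rightarrow> nat) \<Rightarrow> bool" where
  "feasible_strategy G \<longleftrightarrow>
     (\<forall>l s. set l \<subseteq> supp_mu \<longrightarrow> s \<in> supp_mu \<longrightarrow> G (l @ [s]) \<in> out_nbhd E (G l) s)"

lemma feasible_strategy_first_step:
  assumes "feasible_strategy G" "s \<in> supp_mu"
  shows "G [s] \<in> out_nbhd E (G []) s"
proof -
  have "G ([] @ [s]) \<in> out_nbhd E (G []) s"
    using assms(1)[unfolded feasible_strategy_def, rule_format, of "[]" s] assms(2) by simp
  then show ?thesis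
    by simp
qed

lemma feasible_strategy_Cons:
  assumes "feasible_strategy G" "s \<in> supp_mu"
  shows "feasible_strategy (\<lambda>l. G (s # l))"
  unfolding feasible_strategy_def
proof (intro allI impI)
  fix l s'
  assume "set l \<subseteq> supp_mu" "s' \<in> supp_mu"
  moreover have "set (s # l) \<subseteq> supp_mu"
    using assms(2) \<open>set l \<subseteq> supp_mu\<close> by simp
  ultimately have "G ((s # l) @ [s']) \<in> out_nbhd E (G (s # l)) s'"
    using assms(1)[unfolded feasible_strategy_def, rule_format] by blast
  then show "G (s # l @ [s']) \<in> out_nbhd E (G (s # l)) s'"
    by simp
qed

definition first_move :: "(nat list \<Rightarrow> nat) \<Rightarrow> nat \<Rightarrow> nat" where
  "first_move G s = (if s \<in> supp_mu then if G [s] \<in> Q then n+1 else G [s]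
     else SOME j. j \<in> admissible (G []) s)"

lemma first_move_supp: "s \<in> supp_mu \<Longrightarrow> first_move G s = (if G [s] \<in> Q then n+1 else G [s])"
  by (simp only: first_move_def if_True)

lemma first_move_admissible:
  assumes "feasible_strategy G" "s \<in> {1..h}"
  shows "first_move G s \<in> admissible (G []) s"
proof (cases "s \<in> supp_mu")
  case True
  then have "first_move G s \<in> aug (G []) s"
    using aug_of_edge[of "G []" "G [s]" s] feasible_strategy_first_step[OF assms(1) True]
    by (simp add: first_move_supp out_nbhd_def)
  then show ?thesis
    by (auto simp: admissible_def)
next
  case False
  then show ?thesis
    by (simp only: first_move_def if_False some_in_eq admissible_nonempty ex_in_conv not_False_eq_True)
qed

theorem hit_weight_le_v_star: "feasible_strategy G \<Longrightarrow> hit_weight G k \<le> V k (G [])"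
proof (induction k arbitrary: G)
  case 0
  then show ?case
    by (simp add: hit_weight_def)
next
  case (Suc k)
  let ?a = "action_of (first_move G)"
  have a: "?a \<in> actions (G [])"
    by (rule action_of_mem_actions) (rule first_move_admissible[OF Suc.prems])
  have gain: "(if G [s] \<in> Q then 1 else hit_weight (\<lambda>l. G (s # l)) k)
      \<le> mdp_reward n (first_move G s) + V k (first_move G s)" if "s \<in> supp_mu" for s
  proof -
    have "G [s] \<in> {1..n}"
      using feasible_strategy_first_step[OF Suc.prems that] out_nbhd_sub that by blast
    moreover have "hit_weight (\<lambda>l. G (s # l)) k \<le> V k (G [s])"
      using Suc.IH[OF feasible_strategy_Cons[OF Suc.prems that]] .
    ultimately show ?thesis
      using that by (simp add: first_move_supp reward_plus_v_star_target[simplified] reward_plus_v_star_vertex)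
  qed
  have "hit_weight G (Suc k) \<le> (\<Sum>s\<in>{1..h}. mu s * (mdp_reward n (first_move G s) + V k (first_move G s)))"
    unfolding hit_weight_Suc by (rule sum_mono, rule mult_left_mono_supp_mu[OF _ gain])
  also have "\<dots> = action_value k ?a"
    unfolding action_value_eq[OF a] by (intro sum.cong refl) (simp only: nth_action_of)
  also have "\<dots> \<le> V (Suc k) (G [])"
    by (rule action_value_ge_v_star_Suc[OF a])
  finally show ?case .
qed

definition opt_action :: "nat \<Rightarrow> nat \<Rightarrow> nat list" where
  "opt_action r i = (SOME a. a \<in> actions i \<and> action_value r a = V (Suc r) i)"

lemma opt_action_optimal: "opt_action r i \<in> actions i \<and> action_value r (opt_action r i) = V (Suc r) i"
  unfolding opt_action_def using v_star_Suc_attained[of i r] by (rule someI2_bex) blast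

lemma aug_nonempty: "i \<in> {1..n} \<Longrightarrow> s \<in> supp_mu \<Longrightarrow> aug i s \<noteq> {}"
  using out_nbhd_nonempty aug_of_edge by (fastforce simp: out_nbhd_def)

lemma opt_action_in_aug:
  assumes "i \<in> {1..n}" "s \<in> supp_mu"
  shows "opt_action r i ! (s - 1) \<in> aug i s"
proof -
  have "opt_action r i ! (s - 1) \<in> admissible i s"
    using assms(2) by (intro nth_action_admissible[OF conjunct1[OF opt_action_optimal]]) simp
  then show ?thesis
    unfolding admissible_def if_not_P[OF aug_nonempty[OF assms]] .
qed

definition greedy_step :: "nat \<Rightarrow> nat \<Rightarrow> nat \<Rightarrow> nat" where
  "greedy_step r i s =
    (let c = opt_action r i ! (s - 1) in
     if c = n+1 \<and> Q \<inter> out_nbhd E i s \<noteq> {} then SOME q. q \<in> Q \<inter> out_nbhd E i s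
     else if c \<in> out_nbhd E i s then c
     else SOME j. j \<in> out_nbhd E i s)"

lemma greedy_step_in_out_nbhd:
  assumes "out_nbhd E i s \<noteq> {}"
  shows "greedy_step r i s \<in> out_nbhd E i s"
proof -
  have "(SOME q. q \<in> Q \<inter> out_nbhd E i s) \<in> Q \<inter> out_nbhd E i s" if "Q \<inter> out_nbhd E i s \<noteq> {}"
    by (rule someI_ex) (use that in blast)
  moreover have "(SOME j. j \<in> out_nbhd E i s) \<in> out_nbhd E i s"
    using assms by (rule some_in_eq[THEN iffD2])
  ultimately show ?thesis
    unfolding greedy_step_def Let_def by auto
qed

lemma greedy_step_target:
  assumes "i \<in> {1..n}" "s \<in> supp_mu" "opt_action r i ! (s - 1) = n+1"
  shows "greedy_step r i s \<in> Q"
proof -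
  have "Q \<inter> out_nbhd E i s \<noteq> {}"
    by (rule aug_cases[OF opt_action_in_aug[OF assms(1,2), of r] assms(1) CollectD[OF assms(2), THEN conjunct1]])
      (use assms(3) in \<open>auto simp: out_nbhd_def\<close>)
  then have "(SOME q. q \<in> Q \<inter> out_nbhd E i s) \<in> Q \<inter> out_nbhd E i s"
    by (rule someI_ex[OF ex_in_conv[THEN iffD2]])
  with assms(3) \<open>Q \<inter> out_nbhd E i s \<noteq> {}\<close> show ?thesis
    unfolding greedy_step_def Let_def by simp
qed

lemma greedy_step_vertex:
  assumes "i \<in> {1..n}" "s \<in> supp_mu" "opt_action r i ! (s - 1) \<noteq> n+1"
  shows "greedy_step r i s = opt_action r i ! (s - 1)" "greedy_step r i s \<in> {1..n} - Q"
proof -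
  let ?c = "opt_action r i ! (s - 1)"
  have "?c \<in> out_nbhd E i s \<and> ?c \<in> {1..n} - Q"
    by (rule aug_cases[OF opt_action_in_aug[OF assms(1,2), of r] assms(1) CollectD[OF assms(2), THEN conjunct1]])
      (use assms(3) in \<open>auto simp: out_nbhd_def\<close>)
  with assms(3) show "greedy_step r i s = ?c" "greedy_step r i s \<in> {1..n} - Q"
    unfolding greedy_step_def Let_def by simp_all
qed

text \<open>The horizon counts down by truncated subtraction; beyond it (0 - 1 = 0) the walk keeps
  following edges, as a stochastic path has to.\<close>

primrec greedy_walk :: "nat \<Rightarrow> nat \<Rightarrow> nat list \<Rightarrow> nat" where
  "greedy_walk r i [] = i"
| "greedy_walk r i (s # l) = greedy_walk (r - 1) (greedy_step (r - 1) i s) l"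

lemma greedy_walk_snoc:
  "greedy_walk r i (l @ [s]) = greedy_step (r - length l - 1) (greedy_walk r i l) s"
  by (induction l arbitrary: r i) (simp_all add: diff_diff_add)

theorem v_star_le_hit_weight_greedy: "i \<in> {1..n} \<Longrightarrow> V k i \<le> hit_weight (greedy_walk k i) k"
proof (induction k arbitrary: i)
  case 0
  then show ?case
    by (simp add: hit_weight_def)
next
  case (Suc k)
  let ?a = "opt_action k i"
  have gain: "mdp_reward n (?a ! (s - 1)) + V k (?a ! (s - 1))
      \<le> (if greedy_step k i s \<in> Q then 1 else hit_weight (greedy_walk k (greedy_step k i s)) k)"
    if "s \<in> supp_mu" for s
  proof (cases "?a ! (s - 1) = n+1")
    case True
    with greedy_step_target[OF Suc.prems that] show ?thesis
      by (simp add: reward_plus_v_star_target[simplified])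
  next
    case False
    with greedy_step_vertex[OF Suc.prems that False] Suc.IH[of "greedy_step k i s"] show ?thesis
      by (simp add: reward_plus_v_star_vertex)
  qed
  have shift: "(\<lambda>l. greedy_walk (Suc k) i (s # l)) = greedy_walk k (greedy_step k i s)" for s
    by (simp add: fun_eq_iff)
  have "V (Suc k) i = action_value k ?a"
    using opt_action_optimal by simp
  also have "\<dots> = (\<Sum>s\<in>{1..h}. mu s * (mdp_reward n (?a ! (s - 1)) + V k (?a ! (s - 1))))"
    by (rule action_value_eq[OF conjunct1[OF opt_action_optimal]])
  also have "\<dots> \<le> (\<Sum>s\<in>{1..h}. mu s *
      (if greedy_step k i s \<in> Q then 1 else hit_weight (greedy_walk k (greedy_step k i s)) k))"
    by (rule sum_mono, rule mult_left_mono_supp_mu[OF _ gain])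
  also have "\<dots> = hit_weight (greedy_walk (Suc k) i) (Suc k)"
    by (simp only: hit_weight_Suc shift greedy_walk.simps diff_Suc_1)
  finally show ?case .
qed

end

section \<open>Stochastic paths as strategies\<close>

locale stochastic_digraph = iid_inputs M w h mu
  for M :: "'a measure" and w h mu +
  fixes n :: nat and E :: "nat \<Rightarrow> (nat \<times> nat) set" and Q :: "nat set"
  assumes edges_sub: "s \<in> {1..h} \<Longrightarrow> E s \<subseteq> {1..n} \<times> {1..n}"
    and out_nbhd_nonempty: "i \<in> {1..n} \<Longrightarrow> s \<in> {1..h} \<Longrightarrow> 0 < mu s \<Longrightarrow> out_nbhd E i s \<noteq> {}"

sublocale stochastic_digraph \<subseteq> reach_mdp n h E Q mu
  by unfold_locales (fact mu_nonneg sum_mu_eq_1 edges_sub out_nbhd_nonempty)+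

context stochastic_digraph
begin

abbreviation reach_event :: "(nat \<Rightarrow> 'a \<Rightarrow> nat) \<Rightarrow> ('a \<Rightarrow> enat) \<Rightarrow> nat \<Rightarrow> 'a set" where
  "reach_event X K k \<equiv> {\<omega>\<in>space M. \<exists>t\<in>{1..k}. enat t \<le> K \<omega> \<and> X t \<omega> \<in> Q}"

lemma stoch_path_step:
  assumes "stoch_path M w (out_nbhd E) x X K" "maximal_path M w (out_nbhd E) X K"
    and "\<omega> \<in> space M" "enat t \<le> K \<omega>" "X t \<omega> \<in> {1..n}" "w t \<omega> \<in> supp_mu"
  shows "enat t < K \<omega>" "X (Suc t) \<omega> \<in> out_nbhd E (X t \<omega>) (w t \<omega>)"
proof -
  have "out_nbhd E (X t \<omega>) (w t \<omega>) \<noteq> {}"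
    using out_nbhd_nonempty assms(5,6) by simp
  with assms(2,3) have "K \<omega> \<noteq> enat t"
    unfolding maximal_path_def by blast
  with assms(4) show "enat t < K \<omega>"
    by simp
  with assms(1,3) show "X (Suc t) \<omega> \<in> out_nbhd E (X t \<omega>) (w t \<omega>)"
    unfolding stoch_path_def by blast
qed

lemma stoch_path_survives:
  assumes path: "stoch_path M w (out_nbhd E) x X K" "maximal_path M w (out_nbhd E) X K"
    and "x \<in> {1..n}" "\<omega> \<in> space M" "\<forall>i<t. w i \<omega> \<in> supp_mu"
  shows "enat t \<le> K \<omega> \<and> X t \<omega> \<in> {1..n}"
  using assms(5)
proof (induction t)
  case 0
  with assms(1,3,4) show ?case
    by (simp add: stoch_path_def zero_enat_def[symmetric])
next
  case (Suc t)
  then have "enat t \<le> K \<omega>" "X t \<omega> \<in> {1..n}" and s: "w t \<omega> \<in> supp_mu"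
    by auto
  note step = stoch_path_step[OF path assms(4) this]
  then have "X (Suc t) \<omega> \<in> {1..n}"
    using out_nbhd_sub s by blast
  with step(1) show ?case
    by (simp add: Suc_ile_eq)
qed

text \<open>On input words that no sample realises, which have probability 0, the value is junk.\<close>

definition path_strategy :: "(nat \<Rightarrow> 'a \<Rightarrow> nat) \<Rightarrow> nat list \<Rightarrow> nat" where
  "path_strategy X l = X (length l) (SOME \<omega>. \<omega> \<in> space M \<and> input_prefix w (length l) \<omega> = l)"

lemma path_strategy_input_prefix:
  assumes "stoch_path M w H x X K" "\<omega> \<in> space M"
  shows "path_strategy X (input_prefix w t \<omega>) = X t \<omega>"
proof -
  let ?\<omega> = "SOME \<omega>'. \<omega>' \<in> space M \<and> input_prefix w t \<omega>' = input_prefix w t \<omega>"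
  have "?\<omega> \<in> space M \<and> input_prefix w t ?\<omega> = input_prefix w t \<omega>"
    by (rule someI[of _ \<omega>]) (simp add: assms(2))
  then show ?thesis
    unfolding path_strategy_def using stoch_path_input_prefix_eq[OF assms(1) _ assms(2)] by simp
qed

lemma feasible_path_strategy:
  assumes path: "stoch_path M w (out_nbhd E) x X K" "maximal_path M w (out_nbhd E) X K"
    and "x \<in> {1..n}"
  shows "feasible_strategy (path_strategy X)"
  unfolding feasible_strategy_def
proof (intro allI impI)
  fix l s
  assume l: "set l \<subseteq> supp_mu" and s: "s \<in> supp_mu"
  let ?t = "length l"
  have "l @ [s] \<in> words h (Suc ?t)" "word_prob mu (l @ [s]) \<noteq> 0"
    using l s by (auto simp: words_def word_prob_def prod_list_zero_iff)
  then obtain \<omega> where \<omega>: "\<omega> \<in> space M" "input_prefix w (Suc ?t) \<omega> = l @ [s]"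
    using exists_input_prefix_eq by blast
  then have prefix: "input_prefix w ?t \<omega> = l" and "w ?t \<omega> = s"
    by (simp_all add: input_prefix_Suc)
  have "w i \<omega> \<in> supp_mu" if "i < ?t" for i
    using nth_input_prefix[OF that, of w \<omega>] prefix l nth_mem[OF that] by auto
  then have "enat ?t \<le> K \<omega>" "X ?t \<omega> \<in> {1..n}"
    using stoch_path_survives[OF path assms(3) \<omega>(1)] by auto
  with \<open>w ?t \<omega> = s\<close> s have "X (Suc ?t) \<omega> \<in> out_nbhd E (X ?t \<omega>) s"
    using stoch_path_step(2)[OF path \<omega>(1)] by blast
  moreover have "path_strategy X (l @ [s]) = X (Suc ?t) \<omega>"
    using path_strategy_input_prefix[OF path(1) \<omega>(1), of "Suc ?t"] \<omega>(2) by simp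
  moreover have "path_strategy X l = X ?t \<omega>"
    using path_strategy_input_prefix[OF path(1) \<omega>(1), of ?t] prefix by simp
  ultimately show "path_strategy X (l @ [s]) \<in> out_nbhd E (path_strategy X l) s"
    by simp
qed

lemma prob_hits_eq_hit_weight: "prob {\<omega>\<in>space M. hits Q G k (input_prefix w k \<omega>)} = hit_weight G k"
  using prob_input_prefix_in[of k "{ss. hits Q G k ss}"] by (simp add: hit_weight_def)

theorem measure_reach_le_v_star:
  assumes path: "stoch_path M w (out_nbhd E) x X K" "maximal_path M w (out_nbhd E) X K"
    and x: "x \<in> {1..n}"
  shows "measure M (reach_event X K k) \<le> V k x"
proof -
  let ?G = "path_strategy X"
  have "reach_event X K k \<subseteq> {\<omega>\<in>space M. hits Q ?G k (input_prefix w k \<omega>)}"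
    using path_strategy_input_prefix[OF path(1)]
    by (auto simp: hits_def take_input_prefix)
  then have "measure M (reach_event X K k) \<le> prob {\<omega>\<in>space M. hits Q ?G k (input_prefix w k \<omega>)}"
    using sets_input_prefix_in[of k "{ss. hits Q ?G k ss}"] by (intro finite_measure_mono) simp_all
  also have "\<dots> = hit_weight ?G k"
    by (rule prob_hits_eq_hit_weight)
  also have "\<dots> \<le> V k (?G [])"
    by (rule hit_weight_le_v_star[OF feasible_path_strategy[OF path x]])
  also have "?G [] = x"
    using path_strategy_input_prefix[OF path(1), of _ 0] path(1) not_empty
    by (auto simp: stoch_path_def input_prefix_def)
  finally show ?thesis .
qed

definition greedy_path :: "nat \<Rightarrow> nat \<Rightarrow> nat \<Rightarrow> 'a \<Rightarrow> nat" where
  "greedy_path k x t \<omega> = greedy_walk k x (input_prefix w t \<omega>)"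

definition greedy_stop :: "nat \<Rightarrow> nat \<Rightarrow> 'a \<Rightarrow> enat" where
  "greedy_stop k x \<omega> = first_time (\<lambda>t. out_nbhd E (greedy_path k x t \<omega>) (w t \<omega>) = {})"

lemma greedy_path_Suc: "greedy_path k x (Suc t) \<omega> = greedy_step (k - t - 1) (greedy_path k x t \<omega>) (w t \<omega>)"
  by (simp add: greedy_path_def input_prefix_Suc greedy_walk_snoc)

lemma stoch_path_greedy: "stoch_path M w (out_nbhd E) x (greedy_path k x) (greedy_stop k x)"
  unfolding stoch_path_def
proof (intro conjI ballI allI impI)
  fix \<omega> t
  assume "enat t < greedy_stop k x \<omega>"
  then have "enat (Suc t) \<le> greedy_stop k x \<omega>"
    by (simp add: Suc_ile_eq)
  then have "out_nbhd E (greedy_path k x t \<omega>) (w t \<omega>) \<noteq> {}"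
    by (simp add: greedy_stop_def enat_le_first_time_iff)
  then show "greedy_path k x (Suc t) \<omega> \<in> out_nbhd E (greedy_path k x t \<omega>) (w t \<omega>)"
    unfolding greedy_path_Suc by (rule greedy_step_in_out_nbhd)
next
  fix t
  show "greedy_path k x (Suc t) \<in> vimage_algebra (space M) (\<lambda>\<omega>. map (\<lambda>i. w i \<omega>) [0..<Suc t])
      (count_space UNIV) \<rightarrow>\<^sub>M count_space UNIV"
    unfolding greedy_path_def input_prefix_def
    by (rule measurable_compose[OF measurable_vimage_algebra1 measurable_count_space]) simp
qed (simp add: greedy_path_def input_prefix_def)

lemma maximal_path_greedy: "maximal_path M w (out_nbhd E) (greedy_path k x) (greedy_stop k x)"
  unfolding maximal_path_def greedy_stop_def by (auto dest: first_time_eq_enatD)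

lemma sets_reach_event_greedy: "reach_event (greedy_path k x) (greedy_stop k x) k \<in> sets M"
proof (rule sets_input_prefix_determined)
  fix \<omega> \<omega>'
  assume eq: "input_prefix w k \<omega> = input_prefix w k \<omega>'"
    and reach: "\<exists>t\<in>{1..k}. enat t \<le> greedy_stop k x \<omega> \<and> greedy_path k x t \<omega> \<in> Q"
  have prefix_eq: "input_prefix w t \<omega> = input_prefix w t \<omega>'" if "t \<le> k" for t
    using arg_cong[OF eq, of "take t"] that by (simp add: take_input_prefix)
  then have path_eq: "greedy_path k x t \<omega> = greedy_path k x t \<omega>'" if "t \<le> k" for t
    using that by (simp add: greedy_path_def)
  have nbhd_eq: "out_nbhd E (greedy_path k x t \<omega>) (w t \<omega>) = out_nbhd E (greedy_path k x t \<omega>') (w t \<omega>')"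
    if "t < k" for t
    using prefix_eq[of "Suc t"] path_eq[of t] that by (simp add: input_prefix_Suc)
  have "enat t \<le> greedy_stop k x \<omega> \<longleftrightarrow> enat t \<le> greedy_stop k x \<omega>'" if "t \<le> k" for t
    using nbhd_eq[OF order_less_le_trans[OF _ that]]
    by (simp add: greedy_stop_def enat_le_first_time_iff)
  with reach path_eq show "\<exists>t\<in>{1..k}. enat t \<le> greedy_stop k x \<omega>' \<and> greedy_path k x t \<omega>' \<in> Q"
    by auto
qed

theorem v_star_le_measure_reach_greedy:
  assumes x: "x \<in> {1..n}"
  shows "V k x \<le> measure M (reach_event (greedy_path k x) (greedy_stop k x) k)"
proof -
  let ?B = "{ss. set ss \<subseteq> supp_mu \<and> hits Q (greedy_walk k x) k ss}"
  have "V k x \<le> hit_weight (greedy_walk k x) k"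
    by (rule v_star_le_hit_weight_greedy[OF x])
  also have "\<dots> = prob {\<omega>\<in>space M. input_prefix w k \<omega> \<in> ?B}"
    unfolding prob_input_prefix_in hit_weight_supp_mu by simp
  also have "\<dots> \<le> measure M (reach_event (greedy_path k x) (greedy_stop k x) k)"
  proof (rule finite_measure_mono[OF _ sets_reach_event_greedy], safe)
    fix \<omega>
    assume \<omega>: "\<omega> \<in> space M" and supp: "set (input_prefix w k \<omega>) \<subseteq> supp_mu"
      and "hits Q (greedy_walk k x) k (input_prefix w k \<omega>)"
    then obtain t where t: "t \<in> {1..k}" "greedy_path k x t \<omega> \<in> Q"
      by (auto simp: hits_def take_input_prefix greedy_path_def)
    have "w i \<omega> \<in> supp_mu" if "i < t" for i
    proof -
      have "w i \<omega> \<in> set (input_prefix w k \<omega>)"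
        using nth_mem[of i "input_prefix w k \<omega>"] that t(1) by simp
      with supp show ?thesis
        by blast
    qed
    then have "enat t \<le> greedy_stop k x \<omega>"
      using stoch_path_survives[OF stoch_path_greedy maximal_path_greedy x \<omega>] by blast
    with t show "\<exists>t\<in>{1..k}. enat t \<le> greedy_stop k x \<omega> \<and> greedy_path k x t \<omega> \<in> Q"
      by blast
  qed
  finally show ?thesis .
qed

lemma weak_reach_eq_v_star:
  assumes x: "x \<in> {1..n}"
  shows "weak_reach M w (out_nbhd E) Q k x = V k x"
  unfolding weak_reach_def
proof (rule cSup_eq_maximum)
  have "measure M (reach_event (greedy_path k x) (greedy_stop k x) k) = V k x"
    using v_star_le_measure_reach_greedy[OF x]
      measure_reach_le_v_star[OF stoch_path_greedy maximal_path_greedy x] by (rule antisym[rotated])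
  then show "V k x \<in> {measure M (reach_event X K k) | X K.
      stoch_path M w (out_nbhd E) x X K \<and> maximal_path M w (out_nbhd E) X K}"
    using stoch_path_greedy maximal_path_greedy
    by (intro CollectI exI[of _ "greedy_path k x"] exI[of _ "greedy_stop k x"]) simp
next
  fix y
  assume "y \<in> {measure M (reach_event X K k) | X K.
      stoch_path M w (out_nbhd E) x X K \<and> maximal_path M w (out_nbhd E) X K}"
  with measure_reach_le_v_star[OF _ _ x] show "y \<le> V k x"
    by blast
qed

end

theorem proposition1:
  fixes M :: "'a measure" and w :: "nat \<Rightarrow> 'a \<Rightarrow> nat" and mu :: "nat \<Rightarrow> real"
    and n h :: nat and E :: "nat \<Rightarrow> (nat \<times> nat) set" and Q :: "nat set"
  assumes "prob_space M"
    and "\<forall>i. w i \<in> measurable M (count_space UNIV)"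
    and "\<forall>i. \<forall>\<omega>\<in>space M. w i \<omega> \<in> {1..h}"
    and "prob_space.indep_vars M (\<lambda>_. count_space UNIV) w UNIV"
    and "\<forall>i. \<forall>s\<in>{1..h}. measure M {\<omega>\<in>space M. w i \<omega> = s} = mu s"
    and "\<forall>s\<in>{1..h}. E s \<subseteq> {1..n} \<times> {1..n}"
    and "\<not> (\<exists>i\<in>{1..n}. \<exists>s\<in>{1..h}. mu s > 0 \<and> out_nbhd E i s = {})"
    and "Q \<subseteq> {1..n}"
  shows "\<forall>k. \<forall>x\<in>{1..n}. weak_reach M w (out_nbhd E) Q k x = v_star n h Q E mu k x"
proof -
  interpret stochastic_digraph M w h mu n E Q
    by (intro stochastic_digraph.intro iid_inputs.intro iid_inputs_axioms.intro
        stochastic_digraph_axioms.intro assms(1)) (use assms(2-7) in auto)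
  show ?thesis
    using weak_reach_eq_v_star by blast
qed

end
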